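(* Let $I_1,I_2,J$ be intervals of $B$. Suppose $I_1$ and $I_2$ are of the same type, and $J$ is not of the same type as $I_1$ nor as $I_2$. Then every composition of morphisms $k_{I_1}\to k_J\to k_{I_2}$ is zero.
   Context: Let $k$ be a field. The bipath poset $B$ has underlying set $(\mathbb{R}\times\{1,2\})\sqcup\{-\infty,+\infty\}$. Its order is: $x\le y$ iff $x=-\infty$, or $y=+\infty$, or $x=(s,i)$, $y=(t,i)$ with the same $i$ and $s\le t$. $B$-persistence modules are functors from $B$ (as a category) to $k$-vector spaces, with morphisms the natural transformations. An interval of $B$ is a nonempty convex and connected subset (convex: $p,q\in I$, $p\le r\le q$ imply $r\in I$; connected: any two elements are joined by a finite sequence in $I$ with consecutive ones comparable). The interval module $k_I$ is $k$ on $I$ and $0$ elsewhere, with identity maps within $I$ and zero maps otherwise. The types of intervals are: - $\mathcal{U}$: intervals contained in $\mathbb{R}\times\{1\}$; - $\mathcal{D}$: intervals contained in $\mathbb{R}\times\{2\}$; - $\mathcal{B}=\{B\}$; - $\mathcal{L}$: intervals $\neq B$ containing $-\infty$; - $\mathcal{R}$: intervals $\neq B$ containing $+\infty$. Two intervals are of the same type if they lie in the same one of these five sets. *)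

theory Defs
  imports Complex_Main
begin

text \<open>Points: NegInf (= -infinity), PosInf (= +infinity), and P s i for (s,i) in R x {1,2};
  the second component is encoded as a boolean: True for 1, False for 2.\<close>

datatype bpt = NegInf | PosInf | P real bool

fun ble :: "bpt \<Rightarrow> bpt \<Rightarrow> bool" where
  "ble NegInf y = True"
| "ble x PosInf = True"
| "ble (P s i) (P t j) = (i = j \<and> s \<le> t)"
| "ble _ _ = False"

definition convex_B :: "bpt set \<Rightarrow> bool" where
  "convex_B I \<longleftrightarrow> (\<forall>p q r. p \<in> I \<longrightarrow> q \<in> I \<longrightarrow> ble p r \<longrightarrow> ble r q \<longrightarrow> r \<in> I)"

definition connected_B :: "bpt set \<Rightarrow> bool" where
  "connected_B I \<longleftrightarrow> (\<forall>p\<in>I. \<forall>q\<in>I.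
      (\<lambda>a b. a \<in> I \<and> b \<in> I \<and> (ble a b \<or> ble b a))\<^sup>*\<^sup>* p q)"

definition interval_B :: "bpt set \<Rightarrow> bool" where
  "interval_B I \<longleftrightarrow> I \<noteq> {} \<and> convex_B I \<and> connected_B I"

definition typeU :: "bpt set \<Rightarrow> bool" where
  "typeU I \<longleftrightarrow> interval_B I \<and> I \<subseteq> {P s True | s. True}"
definition typeD :: "bpt set \<Rightarrow> bool" where
  "typeD I \<longleftrightarrow> interval_B I \<and> I \<subseteq> {P s False | s. True}"
definition typeB :: "bpt set \<Rightarrow> bool" where
  "typeB I \<longleftrightarrow> I = UNIV"
definition typeL :: "bpt set \<Rightarrow> bool" where
  "typeL I \<longleftrightarrow> interval_B I \<and> I \<noteq> UNIV \<and> NegInf \<in> I"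
definition typeR :: "bpt set \<Rightarrow> bool" where
  "typeR I \<longleftrightarrow> interval_B I \<and> I \<noteq> UNIV \<and> PosInf \<in> I"

definition same_type :: "bpt set \<Rightarrow> bpt set \<Rightarrow> bool" where
  "same_type I J \<longleftrightarrow> (typeU I \<and> typeU J) \<or> (typeD I \<and> typeD J) \<or> (typeB I \<and> typeB J)
     \<or> (typeL I \<and> typeL J) \<or> (typeR I \<and> typeR J)"

text \<open>The interval module k_I: at x the space is k (as a k-vector space) if x in I, and
  the zero subspace {0} of k otherwise; the structure map for x <= y is the identity if
  x, y in I and zero otherwise.\<close>

definition ival_space :: "bpt set \<Rightarrow> bpt \<Rightarrow> 'k::field set" where
  "ival_space I x = (if x \<in> I then UNIV else {0})"

definition ival_map :: "bpt set \<Rightarrow> bpt \<Rightarrow> bpt \<Rightarrow> 'k::field \<Rightarrow> 'k" where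
  "ival_map I x y = (if x \<in> I \<and> y \<in> I then id else (\<lambda>_. 0))"

definition ival_morphism :: "bpt set \<Rightarrow> bpt set \<Rightarrow> (bpt \<Rightarrow> 'k::field \<Rightarrow> 'k) \<Rightarrow> bool" where
  "ival_morphism I J f \<longleftrightarrow>
     (\<forall>x. (\<forall>v \<in> ival_space I x. f x v \<in> ival_space J x)
        \<and> (\<forall>v \<in> ival_space I x. \<forall>w \<in> ival_space I x. f x (v + w) = f x v + f x w)
        \<and> (\<forall>a. \<forall>v \<in> ival_space I x. f x (a * v) = a * f x v))
   \<and> (\<forall>x y. ble x y \<longrightarrow> (\<forall>v \<in> ival_space I x.
        f y (ival_map I x y v) = ival_map J x y (f x v)))"

definition comp_is_zero :: "bpt set \<Rightarrow> (bpt \<Rightarrow> 'k::field \<Rightarrow> 'k) \<Rightarrow> (bpt \<Rightarrow> 'k \<Rightarrow> 'k) \<Rightarrow> bool" where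
  "comp_is_zero I f g \<longleftrightarrow> (\<forall>x. \<forall>v \<in> ival_space I x. g x (f x v) = 0)"

end

theory Submission
  imports Defs
begin

text \<open>The type of an interval is determined by which of \<open>-\<infinity>\<close>, \<open>+\<infinity>\<close> it contains, together
  with any one of its points (which fixes the line when it contains neither). A morphism
  \<open>k\<^sub>I \<rightarrow> k\<^sub>J\<close> that is nonzero at a common point \<open>x\<close> forces \<open>I\<close> to contain every
  point of \<open>J\<close> above \<open>x\<close> and \<open>J\<close> every point of \<open>I\<close> below \<open>x\<close>; applied to \<open>\<plusminus>\<infinity>\<close>, which
  are comparable with everything, this says \<open>+\<infinity> \<in> J \<Longrightarrow> +\<infinity> \<in> I\<close> and
  \<open>-\<infinity> \<in> I \<Longrightarrow> -\<infinity> \<in> J\<close>. For a nonzero composite \<open>k\<^sub>I\<^sub>1 \<rightarrow> k\<^sub>J \<rightarrow> k\<^sub>I\<^sub>2\<close> these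
  inclusions close up into a cycle through \<open>I\<^sub>1\<close> and \<open>I\<^sub>2\<close>, which contain the same
  infinities, so \<open>J\<close> contains the same infinities as \<open>I\<^sub>1\<close> and has its type.\<close>

lemma ble_NegInf: "ble NegInf x"
  by simp

lemma ble_PosInf: "ble x PosInf"
  by (cases x) auto

lemma nonzero_in_ival_space_imp_mem:
  "v \<in> ival_space I x \<Longrightarrow> v \<noteq> 0 \<Longrightarrow> x \<in> I"
  by (auto simp: ival_space_def split: if_splits)

lemma ival_morphism_in_space:
  "ival_morphism I J f \<Longrightarrow> v \<in> ival_space I x \<Longrightarrow> f x v \<in> ival_space J x"
  unfolding ival_morphism_def by blast

lemma ival_morphism_zero:
  assumes "ival_morphism I J f"
  shows "f x 0 = 0"
proof -
  have "0 \<in> ival_space I x"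
    by (simp add: ival_space_def)
  then have "f x (0 * 0) = 0 * f x 0"
    using assms unfolding ival_morphism_def by blast
  then show ?thesis by simp
qed

lemma ival_morphism_natural:
  "ival_morphism I J f \<Longrightarrow> ble x y \<Longrightarrow> v \<in> ival_space I x
    \<Longrightarrow> f y (ival_map I x y v) = ival_map J x y (f x v)"
  unfolding ival_morphism_def by blast

lemma ival_morphism_vanishes_if_target_exceeds_above:
  assumes f: "ival_morphism I J f" and "x \<in> I" "x \<in> J" "ble x y" "y \<in> J" "y \<notin> I"
  shows "f x v = 0"
proof -
  have "f y (ival_map I x y v) = ival_map J x y (f x v)"
    using ival_morphism_natural[OF f] assms by (simp add: ival_space_def)
  then show ?thesis
    using assms by (simp add: ival_map_def ival_morphism_zero[OF f])
qed

lemma ival_morphism_vanishes_if_source_exceeds_below: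
  assumes f: "ival_morphism I J f" and "x \<in> I" "ble y x" "y \<in> I" "y \<notin> J"
  shows "f x v = 0"
proof -
  have "f x (ival_map I y x v) = ival_map J y x (f y v)"
    using ival_morphism_natural[OF f] assms by (simp add: ival_space_def)
  then show ?thesis
    using assms by (simp add: ival_map_def)
qed

lemma ival_morphism_nonzero_imp_infinities:
  assumes "ival_morphism I J f" "x \<in> I" "x \<in> J" "f x v \<noteq> 0"
  shows "PosInf \<in> J \<longrightarrow> PosInf \<in> I" and "NegInf \<in> I \<longrightarrow> NegInf \<in> J"
  using ival_morphism_vanishes_if_target_exceeds_above[OF assms(1-3) ble_PosInf]
    ival_morphism_vanishes_if_source_exceeds_below[OF assms(1,2) ble_NegInf] assms(4)
  by blast+

lemma interval_B_with_both_infinities: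
  assumes "interval_B I" "NegInf \<in> I" "PosInf \<in> I"
  shows "I = UNIV"
proof -
  have "r \<in> I" for r
    using assms ble_NegInf[of r] ble_PosInf[of r] unfolding interval_B_def convex_B_def
    by blast
  then show ?thesis by blast
qed

lemma comparability_chain_stays_on_line:
  assumes "(\<lambda>a b. a \<in> I \<and> b \<in> I \<and> (ble a b \<or> ble b a))\<^sup>*\<^sup>* (P s i) q"
    and "NegInf \<notin> I" "PosInf \<notin> I"
  shows "\<exists>t. q = P t i"
  using assms(1)
proof (induction rule: rtranclp_induct)
  case base
  then show ?case by blast
next
  case (step y z)
  then obtain t where "y = P t i" by blast
  with step.hyps(2) assms(2,3) show ?case by (cases z) auto
qed

lemma interval_B_without_infinities_on_line:
  assumes "interval_B I" "NegInf \<notin> I" "PosInf \<notin> I" "P s i \<in> I"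
  shows "I \<subseteq> {P t i | t. True}"
  using assms comparability_chain_stays_on_line[of I s i]
  unfolding interval_B_def connected_B_def by blast

lemma same_type_if_common_point_and_infinities:
  assumes "interval_B I" "interval_B J" "x \<in> I" "x \<in> J"
    and "NegInf \<in> I \<longleftrightarrow> NegInf \<in> J" "PosInf \<in> I \<longleftrightarrow> PosInf \<in> J"
  shows "same_type I J"
proof -
  consider "NegInf \<in> I" "PosInf \<in> I" | "NegInf \<in> I" "PosInf \<notin> I"
    | "NegInf \<notin> I" "PosInf \<in> I" | "NegInf \<notin> I" "PosInf \<notin> I"
    by blast
  then show ?thesis
  proof cases
    case 1
    then show ?thesis
      using assms interval_B_with_both_infinities unfolding same_type_def typeB_def by metis
  next
    case 2
    then show ?thesis using assms unfolding same_type_def typeL_def by auto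
  next
    case 3
    then show ?thesis using assms unfolding same_type_def typeR_def by auto
  next
    case 4
    then obtain s i where x: "x = P s i" using assms by (cases x) auto
    have "I \<subseteq> {P t i | t. True}" "J \<subseteq> {P t i | t. True}"
      using 4 assms interval_B_without_infinities_on_line unfolding x by metis+
    then show ?thesis
      using assms by (cases i) (auto simp: same_type_def typeU_def typeD_def)
  qed
qed

lemma same_type_imp_same_infinities:
  assumes "same_type I J"
  shows "NegInf \<in> I \<longleftrightarrow> NegInf \<in> J" and "PosInf \<in> I \<longleftrightarrow> PosInf \<in> J"
  using assms
  unfolding same_type_def typeU_def typeD_def typeB_def typeL_def typeR_def
  by (auto dest: interval_B_with_both_infinities)

theorem corollary4p5:
  fixes I1 I2 J :: "bpt set"
    and f :: "bpt \<Rightarrow> 'k::field \<Rightarrow> 'k" and g :: "bpt \<Rightarrow> 'k \<Rightarrow> 'k"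
  assumes "interval_B I1" and "interval_B I2" and "interval_B J"
    and "same_type I1 I2"
    and "\<not> same_type J I1" and "\<not> same_type J I2"
    and "ival_morphism I1 J f" and "ival_morphism J I2 g"
  shows "comp_is_zero I1 f g"
  unfolding comp_is_zero_def
proof (intro allI ballI, rule ccontr)
  fix x v
  assume v: "v \<in> ival_space I1 x" and gfv: "g x (f x v) \<noteq> 0"
  have fv: "f x v \<noteq> 0"
    using gfv ival_morphism_zero[OF assms(8)] by metis
  have "v \<noteq> 0"
    using fv ival_morphism_zero[OF assms(7)] by metis
  have fv_space: "f x v \<in> ival_space J x"
    using ival_morphism_in_space[OF assms(7) v] .
  have "x \<in> I1" "x \<in> J" "x \<in> I2"
    using nonzero_in_ival_space_imp_mem[OF v \<open>v \<noteq> 0\<close>]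
      nonzero_in_ival_space_imp_mem[OF fv_space fv]
      nonzero_in_ival_space_imp_mem[OF ival_morphism_in_space[OF assms(8) fv_space] gfv]
    by blast+
  note f_inf = ival_morphism_nonzero_imp_infinities[OF assms(7) \<open>x \<in> I1\<close> \<open>x \<in> J\<close> fv]
  note g_inf = ival_morphism_nonzero_imp_infinities[OF assms(8) \<open>x \<in> J\<close> \<open>x \<in> I2\<close> gfv]
  have "NegInf \<in> J \<longleftrightarrow> NegInf \<in> I1" "PosInf \<in> J \<longleftrightarrow> PosInf \<in> I1"
    using f_inf g_inf same_type_imp_same_infinities[OF assms(4)] by blast+
  then have "same_type J I1"
    by (rule same_type_if_common_point_and_infinities[OF assms(3,1) \<open>x \<in> J\<close> \<open>x \<in> I1\<close>])
  with assms(5) show False ..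
qed

end
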